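(* (1) If $e$ is a quasi-identity of a ring, then so is $e^n$ for each $n\in\mathbb N$. (2) A contractive quasi-identity of a normed algebra is an idempotent, and hence its norm is either $0$ or $1$. (3) A contractive quasi-identity of an operator algebra $A\subset B(H)$ is unique if it exists, and it is Hermitian (hence an orthogonal projection).
   Context: A quasi-identity of a ring $R$ is an element $e\in R$ with $r=er+re-ere$ for all $r\in R$. A quasi-identity $e$ of a normed algebra is contractive if $\|e\|\le1$. An operator algebra $A\subset B(H)$ is a norm-closed subalgebra of $B(H)$ for a Hilbert space $H$. *)

theory Defs
  imports "HOL-Analysis.Analysis"
begin

definition quasi_identity :: "'a::ring \<Rightarrow> bool" where
  "quasi_identity e \<longleftrightarrow> (\<forall>r. r = e * r + r * e - e * r * e)"

text \<open>Positive powers in a not necessarily unital ring: rpow n e = e^n for n >= 1.\<close>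
fun rpow :: "nat \<Rightarrow> 'a::semigroup_mult \<Rightarrow> 'a" where
  "rpow 0 e = undefined"
| "rpow (Suc 0) e = e"
| "rpow (Suc (Suc n)) e = e * rpow (Suc n) e"

definition operator_algebra :: "('h::{real_inner,complete_space} \<Rightarrow>\<^sub>L 'h) set \<Rightarrow> bool" where
  "operator_algebra A \<longleftrightarrow>
     0 \<in> A \<and> (\<forall>x\<in>A. \<forall>y\<in>A. x + y \<in> A) \<and> (\<forall>c. \<forall>x\<in>A. c *\<^sub>R x \<in> A)
     \<and> (\<forall>x\<in>A. \<forall>y\<in>A. x o\<^sub>L y \<in> A) \<and> closed A"

definition op_quasi_identity ::
  "('h::{real_inner,complete_space} \<Rightarrow>\<^sub>L 'h) set \<Rightarrow> ('h \<Rightarrow>\<^sub>L 'h) \<Rightarrow> bool" where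
  "op_quasi_identity A e \<longleftrightarrow> e \<in> A \<and>
     (\<forall>r\<in>A. r = (e o\<^sub>L r) + (r o\<^sub>L e) - (e o\<^sub>L r o\<^sub>L e))"

definition hermitian_op :: "('h::{real_inner,complete_space} \<Rightarrow>\<^sub>L 'h) \<Rightarrow> bool" where
  "hermitian_op T \<longleftrightarrow> (\<forall>x y. inner (T x) y = inner x (T y))"

end

theory Submission
  imports Defs
begin

text \<open>
  In the unitisation, \<open>e\<close> is a quasi-identity iff \<open>(1 - e) r (1 - e) = 0\<close> for all \<open>r\<close>, i.e.
  every \<open>r - e r\<close> is fixed by right multiplication with \<open>e\<close>; such elements are then fixed by
  every power of \<open>e\<close>, which gives (1). Taking \<open>r = e\<close> shows that left multiplication by \<open>e\<close>
  fixes \<open>d = e\<^sup>2 - e\<close>, so \<open>e^(n+1) = e + n d\<close>; if \<open>e\<close> is contractive these powers are bounded,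
  forcing \<open>d = 0\<close>, which gives (2). On a Hilbert space a contractive idempotent has range
  orthogonal to its kernel, so it is an orthogonal projection. If \<open>e\<close> and \<open>f\<close> are such
  projections and quasi-identities of a common algebra, then \<open>(1 - e) f (1 - e) = 0\<close> forces
  \<open>f = f e\<close>, symmetrically \<open>e = e f\<close>, and taking adjoints gives \<open>e = f\<close>.
\<close>

lemma rpow_fixes_left:
  fixes e x :: "'a::semigroup_mult"
  assumes "e * x = x"
  shows "rpow (Suc n) e * x = x"
proof (induction n)
  case (Suc n)
  then show ?case using assms by (simp add: mult.assoc)
qed (simp add: assms)

lemma rpow_fixes_right:
  fixes e x :: "'a::semigroup_mult"
  assumes "x * e = x"
  shows "x * rpow (Suc n) e = x"
proof (induction n)
  case (Suc n)
  have "x * rpow (Suc (Suc n)) e = (x * e) * rpow (Suc n) e" by (simp add: mult.assoc)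
  then show ?case using assms Suc by simp
qed (simp add: assms)

lemma quasi_identity_iff_fixes_right:
  "quasi_identity (e::'a::ring) \<longleftrightarrow> (\<forall>r. (r - e * r) * e = r - e * r)"
  unfolding quasi_identity_def by (simp add: algebra_simps eq_diff_eq) metis

lemma quasi_identity_iff_fixes_left:
  "quasi_identity (e::'a::ring) \<longleftrightarrow> (\<forall>r. e * (r - r * e) = r - r * e)"
  unfolding quasi_identity_def by (simp add: algebra_simps eq_diff_eq) metis

lemma quasi_identity_rpow:
  fixes e :: "'a::ring"
  assumes "quasi_identity e" and "n \<ge> 1"
  shows "quasi_identity (rpow n e)"
proof -
  obtain k where n: "n = Suc k" using assms(2) by (cases n) auto
  define f where "f = rpow n e"
  have "f * (r - r * f) = r - r * f" for r
  proof -
    have "(r - e * r) * f = r - e * r"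
      using assms(1) rpow_fixes_right unfolding quasi_identity_iff_fixes_right f_def n by blast
    then have "e * (r - r * f) = r - r * f" by (simp add: algebra_simps)
    then show ?thesis unfolding f_def n by (rule rpow_fixes_left)
  qed
  then show ?thesis unfolding quasi_identity_iff_fixes_left f_def by blast
qed

lemma bounded_multiples_imp_zero:
  fixes d :: "'a::real_normed_vector"
  assumes "\<And>n::nat. norm (real n *\<^sub>R d) \<le> C"
  shows "d = 0"
proof (rule ccontr)
  assume "d \<noteq> 0"
  then have "norm d > 0" by simp
  then obtain n :: nat where "C < real n * norm d"
    using ex_less_of_nat_mult by blast
  with assms[of n] show False by simp
qed

lemma nonexpansive_linear_fixes_if_fixes_defect:
  fixes L :: "'a::real_normed_vector \<Rightarrow> 'a"
  assumes "linear L" and nonexp: "\<And>x. norm (L x) \<le> norm x" and "L (L e - e) = L e - e"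
  shows "L e = e"
proof -
  define d where "d = L e - e"
  have iterate: "(L ^^ n) e = e + real n *\<^sub>R d" for n
  proof (induction n)
    case (Suc n)
    have "(L ^^ Suc n) e = L e + real n *\<^sub>R L d"
      using Suc linear_add[OF \<open>linear L\<close>] linear_scale[OF \<open>linear L\<close>] by simp
    then show ?case using assms(3) by (simp add: d_def algebra_simps)
  qed simp
  have bounded: "norm ((L ^^ n) e) \<le> norm e" for n
  proof (induction n)
    case (Suc n)
    then show ?case using nonexp[of "(L ^^ n) e"] by simp
  qed simp
  have "norm (real n *\<^sub>R d) \<le> 2 * norm e" for n
  proof -
    have "norm (real n *\<^sub>R d) = norm ((L ^^ n) e - e)" by (simp add: iterate)
    also have "\<dots> \<le> norm ((L ^^ n) e) + norm e" by (rule norm_triangle_ineq4)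
    finally show ?thesis using bounded[of n] by simp
  qed
  then have "d = 0" by (rule bounded_multiples_imp_zero)
  then show ?thesis by (simp add: d_def)
qed

lemma quasi_identity_fixes_square_defect:
  fixes e :: "'a::ring"
  assumes "quasi_identity e"
  shows "e * (e * e - e) = e * e - e"
proof -
  have "(e - e * e) * e = e - e * e"
    using assms unfolding quasi_identity_iff_fixes_right by blast
  then show ?thesis by (simp add: algebra_simps)
qed

lemma contractive_quasi_identity_idempotent:
  fixes e :: "'a::real_normed_algebra"
  assumes "quasi_identity e" and "norm e \<le> 1"
  shows "e * e = e"
proof (rule nonexpansive_linear_fixes_if_fixes_defect[where L = "(*) e"])
  show "linear ((*) e)"
    by (simp add: bounded_linear.linear bounded_linear_mult_right)
  show "norm (e * x) \<le> norm x" for x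
    using norm_mult_ineq[of e x] mult_right_mono[OF assms(2) norm_ge_zero[of x]] by simp
  show "e * (e * e - e) = e * e - e"
    using assms(1) by (rule quasi_identity_fixes_square_defect)
qed

lemma norm_idempotent_cases:
  fixes e :: "'a::real_normed_algebra"
  assumes "e * e = e" and "norm e \<le> 1"
  shows "norm e = 0 \<or> norm e = 1"
proof -
  have "norm e \<le> norm e * norm e" using norm_mult_ineq[of e e] assms(1) by simp
  then have "norm e = 0 \<or> 1 \<le> norm e" by (cases "norm e = 0") auto
  with assms(2) show ?thesis by auto
qed

lemma op_quasi_identity_fixes:
  assumes "op_quasi_identity A e" and "r \<in> A"
  shows "e (r (x - e x)) = r (x - e x)"
proof -
  have quasi: "r = (e o\<^sub>L r) + (r o\<^sub>L e) - (e o\<^sub>L r o\<^sub>L e)"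
    using assms unfolding op_quasi_identity_def by blast
  have "r x = e (r x) + r (e x) - e (r (e x))"
    by (subst quasi) (simp add: blinfun.bilinear_simps)
  then show ?thesis by (simp add: blinfun.diff_right algebra_simps)
qed

lemma contractive_op_quasi_identity_idempotent:
  assumes "op_quasi_identity A e" and "norm e \<le> 1"
  shows "e o\<^sub>L e = e"
proof -
  have "linear ((o\<^sub>L) e)"
    by (rule bounded_linear.linear[OF bounded_bilinear.bounded_linear_right])
      (rule bounded_bilinear_blinfun_compose)
  moreover have "norm (e o\<^sub>L x) \<le> norm x" for x
    using norm_blinfun_compose[of e x] mult_right_mono[OF assms(2) norm_ge_zero[of x]] by simp
  moreover have "e \<in> A" using assms(1) unfolding op_quasi_identity_def by blast
  then have "e o\<^sub>L ((e o\<^sub>L e) - e) = (e o\<^sub>L e) - e"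
  proof (intro blinfun_eqI)
    fix x
    have "e (e (x - e x)) = e (x - e x)"
      using op_quasi_identity_fixes[OF assms(1) \<open>e \<in> A\<close>] .
    then show "(e o\<^sub>L ((e o\<^sub>L e) - e)) x = ((e o\<^sub>L e) - e) x"
      by (simp add: blinfun.diff_left blinfun.diff_right algebra_simps)
  qed
  ultimately show ?thesis by (rule nonexpansive_linear_fixes_if_fixes_defect)
qed

lemma inner_eq_zero_if_norm_le_norm_add_scaleR:
  fixes x y :: "'a::real_inner"
  assumes "\<And>t. norm x \<le> norm (x + t *\<^sub>R y)"
  shows "inner x y = 0"
proof (rule ccontr)
  assume "inner x y \<noteq> 0"
  then have "y \<noteq> 0" by auto
  then have yy: "inner y y > 0" by simp
  define t where "t = - inner x y / inner y y"
  have "inner x x \<le> inner (x + t *\<^sub>R y) (x + t *\<^sub>R y)"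
    using assms[of t] by (simp add: power_mono flip: power2_norm_eq_inner)
  also have "\<dots> = inner x x + 2 * t * inner x y + t * t * inner y y"
    by (simp add: inner_add_left inner_add_right inner_commute algebra_simps)
  also have "\<dots> = inner x x - (inner x y)\<^sup>2 / inner y y"
    using yy by (simp add: t_def field_simps power2_eq_square)
  moreover have "(inner x y)\<^sup>2 / inner y y > 0"
    using yy \<open>inner x y \<noteq> 0\<close> by (intro divide_pos_pos) auto
  ultimately show False by simp
qed

text \<open>The range of a contractive idempotent is orthogonal to its kernel.\<close>
lemma contractive_idempotent_hermitian:
  fixes f :: "'h::{real_inner,complete_space} \<Rightarrow>\<^sub>L 'h"
  assumes idem: "f o\<^sub>L f = f" and "norm f \<le> 1"
  shows "hermitian_op f"
proof -
  have ff: "f (f x) = f x" for x using idem by (metis blinfun_apply_blinfun_compose)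
  have orth: "inner (f x) (y - f y) = 0" for x y
  proof (rule inner_eq_zero_if_norm_le_norm_add_scaleR)
    fix t
    have "f (f x + t *\<^sub>R (y - f y)) = f x" by (simp add: ff blinfun.bilinear_simps)
    then have "norm (f x) \<le> norm f * norm (f x + t *\<^sub>R (y - f y))" by (metis norm_blinfun)
    also have "\<dots> \<le> norm (f x + t *\<^sub>R (y - f y))"
      using mult_right_mono[OF assms(2) norm_ge_zero] by simp
    finally show "norm (f x) \<le> norm (f x + t *\<^sub>R (y - f y))" .
  qed
  have compress: "inner (f x) y = inner (f x) (f y)" for x y
    using orth[of x y] by (simp add: inner_diff_right)
  show ?thesis unfolding hermitian_op_def
    by (metis compress inner_commute)
qed

lemma hermitian_idempotent_absorbs:
  fixes e f :: "'h::{real_inner,complete_space} \<Rightarrow>\<^sub>L 'h"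
  assumes fixed: "\<And>x. e (f (x - e x)) = f (x - e x)"
    and "hermitian_op e" "hermitian_op f" "e o\<^sub>L e = e" "f o\<^sub>L f = f"
  shows "f (e x) = f x"
proof -
  have ee: "e (e x) = e x" and ff: "f (f x) = f x" for x
    using assms(4,5) by (metis blinfun_apply_blinfun_compose)+
  have he: "inner (e u) v = inner u (e v)" and hf: "inner (f u) v = inner u (f v)" for u v
    using assms(2,3) unfolding hermitian_op_def by blast+
  define u where "u = x - e x"
  have "inner (f u) (f u) = inner (f u) u" by (simp add: hf ff)
  also have "\<dots> = inner (e (f u)) u" by (simp add: u_def fixed)
  also have "\<dots> = inner (f u) (e u)" by (rule he)
  also have "\<dots> = 0" by (simp add: u_def ee blinfun.diff_right)
  finally have "f u = 0" by simp
  then show ?thesis by (simp add: u_def blinfun.diff_right)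
qed

lemma hermitian_absorbing_eq:
  fixes e f :: "'h::{real_inner,complete_space} \<Rightarrow>\<^sub>L 'h"
  assumes "hermitian_op e" "hermitian_op f"
    and fe: "\<And>x. f (e x) = f x" and ef: "\<And>x. e (f x) = e x"
  shows "e = f"
proof (rule blinfun_eqI)
  fix x
  have he: "inner (e u) v = inner u (e v)" and hf: "inner (f u) v = inner u (f v)" for u v
    using assms(1,2) unfolding hermitian_op_def by blast+
  have "inner (f x) y = inner (e x) y" for y
  proof -
    have "inner (f x) y = inner (f (e x)) y" by (simp add: fe)
    also have "\<dots> = inner (e x) (f y)" by (rule hf)
    also have "\<dots> = inner x (e (f y))" by (rule he)
    also have "\<dots> = inner (e x) y" by (simp add: ef he)
    finally show ?thesis .
  qed
  then have "inner (f x - e x) (f x - e x) = 0" by (simp add: inner_diff_left)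
  then show "e x = f x" by simp
qed

theorem proposition4p4:
  shows "(\<forall>(e::'a::ring) n. quasi_identity e \<and> n \<ge> 1 \<longrightarrow> quasi_identity (rpow n e))
    \<and> (\<forall>e::'b::real_normed_algebra. quasi_identity e \<and> norm e \<le> 1 \<longrightarrow>
          e * e = e \<and> (norm e = 0 \<or> norm e = 1))
    \<and> (\<forall>A::('h::{real_inner,complete_space} \<Rightarrow>\<^sub>L 'h) set. operator_algebra A \<longrightarrow>
          (\<forall>e f. op_quasi_identity A e \<and> norm e \<le> 1 \<and> op_quasi_identity A f \<and> norm f \<le> 1
                 \<longrightarrow> e = f)
        \<and> (\<forall>e. op_quasi_identity A e \<and> norm e \<le> 1 \<longrightarrow> hermitian_op e))"
proof -
  have projection: "e o\<^sub>L e = e \<and> hermitian_op e"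
    if "op_quasi_identity A e" "norm e \<le> 1" for A and e :: "'h \<Rightarrow>\<^sub>L 'h"
    using contractive_op_quasi_identity_idempotent[OF that]
      contractive_idempotent_hermitian that(2) by blast
  have unique: "e = f"
    if e: "op_quasi_identity A e" "norm e \<le> 1" and f: "op_quasi_identity A f" "norm f \<le> 1"
    for A and e f :: "'h \<Rightarrow>\<^sub>L 'h"
  proof -
    have "e \<in> A" "f \<in> A" using e(1) f(1) unfolding op_quasi_identity_def by blast+
    then have "f (e x) = f x" "e (f x) = e x" for x
      using projection[OF e] projection[OF f]
        hermitian_idempotent_absorbs[OF op_quasi_identity_fixes[OF e(1)]]
        hermitian_idempotent_absorbs[OF op_quasi_identity_fixes[OF f(1)]]
      by blast+
    then show ?thesis
      using projection[OF e] projection[OF f] by (intro hermitian_absorbing_eq) auto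
  qed
  show ?thesis
    using quasi_identity_rpow contractive_quasi_identity_idempotent norm_idempotent_cases
      projection unique
    by blast
qed

end
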